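(* Let $T$ be a tree on $n$ vertices, let $v_1$ and $v_c$ be two non-adjacent vertices of $T$, let $v_1, v_2, \dots, v_c$ be the unique path in $T$ from $v_1$ to $v_c$ (so $c \ge 3$), and let $G$ be the graph obtained from $T$ by adding the edge $v_1v_c$. Define the subtrees $T_1,\dots,T_c$ with $n_j=|V(T_j)|$ as in the context, and order the vertices of $T$ (and $G$) so that the vertices of $T_1$ come first, then those of $T_2$, and so on up to $T_c$. For vertices $a,b$ of $G$ let $\sigma_{a,b}$ be the number of spanning forests of $G$ consisting of two trees, one containing $a$ and the other containing $b$ (with $\sigma_{a,a}=0$), and let $\Sigma=[\sigma_{a,b}]_{a,b=1}^n$. Let $D$ be the distance matrix of $T$. Then $$\Sigma = cD + \tilde{J},\qquad \text{where } \tilde{J} = \left[-(j-k)^2 J_{n_j\times n_k}\right]_{j,k=1,\dots,c}$$ is the block matrix whose $(j,k)$ block is $-(j-k)^2$ times the $n_j\times n_k$ all-ones matrix $J_{n_j\times n_k}$.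
   Context: Subtrees: $T_1$ is the connected component containing $v_1$ of the graph obtained from $T$ by deleting edge $v_1v_2$; $T_c$ is the component containing $v_c$ after deleting edge $v_{c-1}v_c$; for $2\le j\le c-1$, $T_j$ is the component containing $v_j$ after deleting the edges $v_{j-1}v_j$ and $v_jv_{j+1}$. Thus $n=n_1+\dots+n_c$. The distance matrix of a tree has $(a,b)$ entry equal to the graph distance between $a$ and $b$. *)

theory Defs
  imports Main
begin

definition graph :: "'a set \<Rightarrow> 'a set set \<Rightarrow> bool" where
  "graph V E \<longleftrightarrow> finite V \<and> (\<forall>e\<in>E. \<exists>x y. x \<in> V \<and> y \<in> V \<and> x \<noteq> y \<and> e = {x, y})"

definition walk :: "'a set set \<Rightarrow> 'a list \<Rightarrow> bool" where
  "walk E xs \<longleftrightarrow> xs \<noteq> [] \<and> (\<forall>i. Suc i < length xs \<longrightarrow> {xs ! i, xs ! Suc i} \<in> E)"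

definition reach :: "'a set set \<Rightarrow> 'a \<Rightarrow> 'a \<Rightarrow> bool" where
  "reach E x y \<longleftrightarrow> (\<exists>xs. walk E xs \<and> hd xs = x \<and> last xs = y)"

definition connected_graph :: "'a set \<Rightarrow> 'a set set \<Rightarrow> bool" where
  "connected_graph V E \<longleftrightarrow> (\<forall>x\<in>V. \<forall>y\<in>V. reach E x y)"

definition is_cycle :: "'a set set \<Rightarrow> 'a list \<Rightarrow> bool" where
  "is_cycle E xs \<longleftrightarrow> length xs \<ge> 3 \<and> distinct xs \<and> walk E xs \<and> {last xs, hd xs} \<in> E"

definition acyclic_graph :: "'a set set \<Rightarrow> bool" where
  "acyclic_graph E \<longleftrightarrow> \<not> (\<exists>xs. is_cycle E xs)"

definition is_tree :: "'a set \<Rightarrow> 'a set set \<Rightarrow> bool" where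
  "is_tree V E \<longleftrightarrow> graph V E \<and> V \<noteq> {} \<and> connected_graph V E \<and> acyclic_graph E"

definition gdist :: "'a set set \<Rightarrow> 'a \<Rightarrow> 'a \<Rightarrow> nat" where
  "gdist E x y = (LEAST n. \<exists>xs. walk E xs \<and> hd xs = x \<and> last xs = y \<and> length xs = Suc n)"

definition comp :: "'a set \<Rightarrow> 'a set set \<Rightarrow> 'a \<Rightarrow> 'a set" where
  "comp V E x = {y \<in> V. reach E x y}"

text \<open>Vertex set of the subtree T_(j+1) (0-based index j) for the path vs = [v_1,...,v_c]:
  the component of vs!j after deleting the path edges incident to vs!j.\<close>
definition subtree :: "'a set \<Rightarrow> 'a set set \<Rightarrow> 'a list \<Rightarrow> nat \<Rightarrow> 'a set" where
  "subtree V E vs j = comp V (E - {{vs ! i, vs ! Suc i} | i. Suc i < length vs \<and> (i = j \<or> Suc i = j)}) (vs ! j)"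

definition two_forests :: "'a set \<Rightarrow> 'a set set \<Rightarrow> 'a \<Rightarrow> 'a \<Rightarrow> 'a set set set" where
  "two_forests V E a b = {F. F \<subseteq> E \<and> acyclic_graph F \<and> \<not> reach F a b \<and>
                             (\<forall>x\<in>V. reach F a x \<or> reach F b x)}"

definition sigma :: "'a set \<Rightarrow> 'a set set \<Rightarrow> 'a \<Rightarrow> 'a \<Rightarrow> nat" where
  "sigma V E a b = card (two_forests V E a b)"

end

theory Submission
  imports Defs
begin

text \<open>
  Adding the edge \<open>v\<^sub>1v\<^sub>c\<close> closes the path into the unique cycle of \<open>G\<close>, so the spanning
  trees of \<open>G\<close> are \<open>G - e\<close> for the \<open>c\<close> cycle edges \<open>e\<close>, and a two-tree spanning forest
  separating \<open>a\<close> from \<open>b\<close> is \<open>G\<close> minus two edges, at least one of them on the cycle.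
  If the other edge \<open>f\<close> lies in one of the subtrees \<open>T\<^sub>j\<close>, the forest separates \<open>a\<close> from
  \<open>b\<close> iff \<open>f\<close> lies on the \<open>a\<close>-\<open>b\<close> path of \<open>T\<close>, and \<open>f\<close> combines with each of the \<open>c\<close>
  cycle edges. Two cycle edges cut the cycle into two arcs; for \<open>a \<in> T\<^sub>j\<close> and \<open>b \<in> T\<^sub>k\<close>
  they separate \<open>a\<close> from \<open>b\<close> iff \<open>v\<^sub>j\<close> and \<open>v\<^sub>k\<close> lie on different arcs, which happens for
  \<open>|j - k| (c - |j - k|)\<close> pairs. The \<open>a\<close>-\<open>b\<close> path of \<open>T\<close> consists of its edges off the
  cycle and the \<open>|j - k|\<close> path edges between \<open>v\<^sub>j\<close> and \<open>v\<^sub>k\<close>, hence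
  \<open>\<sigma>\<^sub>a\<^sub>b = c d(a, b) - (j - k)\<^sup>2\<close>.
\<close>

lemma walk_singleton [simp]: "walk F [x]"
  by (simp add: walk_def)

lemma walk_Cons_Cons [simp]: "walk F (x # y # ys) \<longleftrightarrow> {x, y} \<in> F \<and> walk F (y # ys)"
proof
  assume "walk F (x # y # ys)"
  then show "{x, y} \<in> F \<and> walk F (y # ys)"
    unfolding walk_def
      by (metis Suc_less_eq length_Cons nth_Cons_0 nth_Cons_Suc zero_less_Suc list.discI)
next
  assume "{x, y} \<in> F \<and> walk F (y # ys)"
  then show "walk F (x # y # ys)"
    unfolding walk_def by (auto simp: nth_Cons split: nat.split)
qed

lemma walk_mono: "walk F xs \<Longrightarrow> F \<subseteq> G \<Longrightarrow> walk G xs"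
  unfolding walk_def by auto

lemma walk_drop: "walk F xs \<Longrightarrow> n < length xs \<Longrightarrow> walk F (drop n xs)"
  unfolding walk_def by auto

lemma reach_iff_rtranclp: "reach F x y \<longleftrightarrow> (\<lambda>u v. {u, v} \<in> F)\<^sup>*\<^sup>* x y"
proof
  have "(\<lambda>u v. {u, v} \<in> F)\<^sup>*\<^sup>* (hd xs) (last xs)" if "walk F xs" for xs
    using that
  proof (induction xs rule: induct_list012)
    case (3 x y zs)
    then show ?case by (auto intro: converse_rtranclp_into_rtranclp)
  qed (auto simp: walk_def)
  then show "reach F x y \<Longrightarrow> (\<lambda>u v. {u, v} \<in> F)\<^sup>*\<^sup>* x y"
    unfolding reach_def by blast
next
  assume "(\<lambda>u v. {u, v} \<in> F)\<^sup>*\<^sup>* x y"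
  then show "reach F x y"
  proof (induction rule: converse_rtranclp_induct)
    case base
    show ?case unfolding reach_def by (intro exI[of _ "[y]"]) simp
  next
    case (step x z)
    then obtain zs where zs: "walk F zs" "hd zs = z" "last zs = y"
      unfolding reach_def by blast
    then have "zs \<noteq> []" by (simp add: walk_def)
    moreover have "{x, z} \<in> F" using step(1) by simp
    ultimately show ?case using zs
      unfolding reach_def by (intro exI[of _ "x # zs"]) (cases zs, auto)
  qed
qed

lemma reach_refl [simp]: "reach F x x"
  by (simp add: reach_iff_rtranclp)

lemma reach_edge: "{x, y} \<in> F \<Longrightarrow> reach F x y"
  by (simp add: reach_iff_rtranclp r_into_rtranclp)

lemma reach_sym: "reach F x y \<Longrightarrow> reach F y x"
proof -
  have "symp (\<lambda>u v. {u, v} \<in> F)" by (auto intro: sympI simp: insert_commute)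
  then show "reach F x y \<Longrightarrow> reach F y x"
    unfolding reach_iff_rtranclp by (metis symp_rtranclp sympD)
qed

lemma reach_trans: "reach F x y \<Longrightarrow> reach F y z \<Longrightarrow> reach F x z"
  unfolding reach_iff_rtranclp by (rule rtranclp_trans)

lemma reach_mono: "reach F x y \<Longrightarrow> F \<subseteq> G \<Longrightarrow> reach G x y"
  unfolding reach_iff_rtranclp by (erule mono_rtranclp[rule_format, rotated]) blast

lemma reach_via_edges:
  assumes "reach F x y" and "\<And>u w. {u, w} \<in> F \<Longrightarrow> reach G u w"
  shows "reach G x y"
  using assms(1) unfolding reach_iff_rtranclp[of F]
  by (induction rule: rtranclp_induct) (auto intro: reach_trans assms(2))

lemma reach_insert_edge:
  assumes "reach (insert {u, v} H) x y"
  shows "reach H x y \<or> (reach H x u \<and> reach H v y) \<or> (reach H x v \<and> reach H u y)"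
  using assms unfolding reach_iff_rtranclp[of "insert {u, v} H"]
proof (induction rule: rtranclp_induct)
  case (step y z)
  then consider "{y, z} \<in> H" | "y = u" "z = v" | "y = v" "z = u"
    by (auto simp: doubleton_eq_iff)
  then show ?case
    using step.IH by cases (meson reach_edge reach_refl reach_sym reach_trans)+
qed simp

lemma reach_diff_edges_within:
  assumes "finite R" and "\<And>e. e \<in> R \<Longrightarrow> \<exists>u\<in>W. \<exists>v\<in>W. e = {u, v}"
    and "reach F x w" and "w \<in> W"
  shows "\<exists>w'\<in>W. reach (F - R) x w'"
  using assms(1,2)
proof (induction R)
  case empty
  then show ?case using assms(3,4) by auto
next
  case (insert e R)
  then obtain w' where w': "w' \<in> W" "reach (F - R) x w'" by blast
  obtain u v where uv: "u \<in> W" "v \<in> W" "e = {u, v}" using insert.prems by blast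
  have "reach (insert {u, v} (F - insert e R)) x w'"
    using w'(2) by (rule reach_mono) (use uv in blast)
  then show ?case using reach_insert_edge[of u v "F - insert e R" x w'] w' uv by blast
qed

lemma walk_shortcut:
  "walk F xs \<Longrightarrow>
    \<exists>ys. walk F ys \<and> distinct ys \<and> hd ys = hd xs \<and> last ys = last xs \<and> length ys \<le> length xs"
proof (induction xs)
  case Nil
  then show ?case by (simp add: walk_def)
next
  case (Cons x xs)
  show ?case
  proof (cases "xs = []")
    case True
    then show ?thesis by (intro exI[of _ "[x]"]) simp
  next
    case False
    then obtain y xs' where xs: "xs = y # xs'" by (cases xs) auto
    with Cons.prems have "{x, y} \<in> F" "walk F xs" by auto
    with Cons.IH obtain ys where ys: "walk F ys" "distinct ys" "hd ys = y" "last ys = last xs"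
        "length ys \<le> length xs" using xs by auto
    have "ys \<noteq> []" using ys(1) by (simp add: walk_def)
    show ?thesis
    proof (cases "x \<in> set ys")
      case True
      then obtain ys1 ys2 where split: "ys = ys1 @ x # ys2" by (meson split_list)
      have "walk F (drop (length ys1) ys)"
        using ys(1) split by (intro walk_drop) auto
      then have "walk F (x # ys2)" using split by simp
      then show ?thesis using ys False split by (intro exI[of _ "x # ys2"]) auto
    next
      case False
      have "walk F (x # ys)" using ys \<open>{x, y} \<in> F\<close> \<open>ys \<noteq> []\<close> by (cases ys) auto
      then show ?thesis using ys False \<open>ys \<noteq> []\<close> \<open>xs \<noteq> []\<close> by (intro exI[of _ "x # ys"]) auto
    qed
  qed
qed

lemma reach_across:
  assumes "(reach F a x \<and> reach F b y) \<or> (reach F b x \<and> reach F a y)"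
  shows "reach F x y \<longleftrightarrow> reach F a b"
  using assms by (meson reach_sym reach_trans)

lemma reach_split_two_classes:
  assumes "reach F a x \<or> reach F b x" "reach F a y \<or> reach F b y" "\<not> reach F x y"
  shows "(reach F a x \<and> reach F b y) \<or> (reach F b x \<and> reach F a y)"
  using assms by (meson reach_sym reach_trans)

lemma acyclic_graph_iff_bridges:
  "acyclic_graph F \<longleftrightarrow> (\<forall>x y. {x, y} \<in> F \<longrightarrow> x \<noteq> y \<longrightarrow> \<not> reach (F - {{x, y}}) x y)"
proof
  assume acyclic: "acyclic_graph F"
  show "\<forall>x y. {x, y} \<in> F \<longrightarrow> x \<noteq> y \<longrightarrow> \<not> reach (F - {{x, y}}) x y"
  proof (intro allI impI notI)
    fix x y assume xy: "{x, y} \<in> F" "x \<noteq> y" and "reach (F - {{x, y}}) x y"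
    then obtain zs where zs: "walk (F - {{x, y}}) zs" "hd zs = x" "last zs = y"
      unfolding reach_def by blast
    obtain ys where ys: "walk (F - {{x, y}}) ys" "distinct ys" "hd ys = x" "last ys = y"
      using walk_shortcut[OF zs(1)] zs(2,3) by auto
    have "length ys \<noteq> 0" "length ys \<noteq> 1" "length ys \<noteq> 2"
      using ys xy by (auto simp: walk_def length_Suc_conv numeral_2_eq_2)
    then have "length ys \<ge> 3" by linarith
    moreover have "{last ys, hd ys} \<in> F" using xy ys by (simp add: insert_commute)
    ultimately have "is_cycle F ys"
      unfolding is_cycle_def using ys walk_mono by blast
    then show False using acyclic unfolding acyclic_graph_def by blast
  qed
next
  assume bridges: "\<forall>x y. {x, y} \<in> F \<longrightarrow> x \<noteq> y \<longrightarrow> \<not> reach (F - {{x, y}}) x y"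
  show "acyclic_graph F"
    unfolding acyclic_graph_def
  proof
    assume "\<exists>xs. is_cycle F xs"
    then obtain xs where xs: "length xs \<ge> 3" "distinct xs" "walk F xs" "{last xs, hd xs} \<in> F"
      unfolding is_cycle_def by blast
    then have "xs \<noteq> []" by auto
    then have ends: "hd xs = xs ! 0" "last xs = xs ! (length xs - 1)"
      by (simp_all add: hd_conv_nth last_conv_nth)
    have "last xs \<noteq> hd xs" using xs(1,2) by (cases xs) auto
    moreover have "walk (F - {{last xs, hd xs}}) xs"
      using xs(1-3) unfolding walk_def ends by (auto simp: doubleton_eq_iff nth_eq_iff_index_eq)
    then have "reach (F - {{last xs, hd xs}}) (hd xs) (last xs)"
      unfolding reach_def by blast
    then have "reach (F - {{last xs, hd xs}}) (last xs) (hd xs)" by (rule reach_sym)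
    ultimately show False using bridges xs(4) by blast
  qed
qed

lemma acyclic_graph_bridge:
  "acyclic_graph F \<Longrightarrow> {x, y} \<in> F \<Longrightarrow> x \<noteq> y \<Longrightarrow> \<not> reach (F - {{x, y}}) x y"
  by (simp add: acyclic_graph_iff_bridges)

lemma acyclic_graph_subset: "acyclic_graph F \<Longrightarrow> H \<subseteq> F \<Longrightarrow> acyclic_graph H"
  unfolding acyclic_graph_def is_cycle_def using walk_mono by blast

lemma acyclic_graph_insert:
  assumes acyclic: "acyclic_graph H" and "u \<noteq> v" and not_reach: "\<not> reach H u v"
  shows "acyclic_graph (insert {u, v} H)"
  unfolding acyclic_graph_iff_bridges
proof (intro allI impI notI)
  fix x y assume e: "{x, y} \<in> insert {u, v} H" and "x \<noteq> y"
    and r: "reach (insert {u, v} H - {{x, y}}) x y"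
  show False
  proof (cases "{x, y} = {u, v}")
    case True
    then have "reach H x y" using r by (rule_tac reach_mono) auto
    with True not_reach show False by (auto simp: doubleton_eq_iff dest: reach_sym)
  next
    case False
    then have xy: "{x, y} \<in> H" and "reach (insert {u, v} (H - {{x, y}})) x y"
      using e r by (auto simp: insert_Diff_if)
    moreover have "\<not> reach (H - {{x, y}}) x y"
      using acyclic_graph_bridge[OF acyclic xy \<open>x \<noteq> y\<close>] .
    ultimately have "(reach (H - {{x, y}}) x u \<and> reach (H - {{x, y}}) v y) \<or>
        (reach (H - {{x, y}}) x v \<and> reach (H - {{x, y}}) u y)"
      using reach_insert_edge[of u v "H - {{x, y}}" x y] by blast
    then have "(reach H u x \<and> reach H v y) \<or> (reach H v x \<and> reach H u y)"
      by (meson Diff_subset reach_mono reach_sym)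
    moreover have "reach H x y" using xy by (rule reach_edge)
    ultimately have "reach H u v" using reach_across[of H u x v y] by blast
    with not_reach show False ..
  qed
qed

definition separating_edges :: "'a set set \<Rightarrow> 'a \<Rightarrow> 'a \<Rightarrow> 'a set set" where
  "separating_edges F a b = {f \<in> F. \<not> reach (F - {f}) a b}"

lemma distinct_walk_edge_eq:
  assumes "distinct ys" "Suc i < length ys" "Suc l < length ys"
    and "{ys ! i, ys ! Suc i} = {ys ! l, ys ! Suc l}"
  shows "i = l"
  using assms by (auto simp: doubleton_eq_iff nth_eq_iff_index_eq)

lemma separating_edges_distinct_walk:
  assumes acyclic: "acyclic_graph F" and ys: "walk F ys" "distinct ys"
  shows "separating_edges F (hd ys) (last ys) = (\<lambda>i. {ys ! i, ys ! Suc i}) ` {i. Suc i < length ys}"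
proof (intro equalityI subsetI)
  fix f assume f: "f \<in> separating_edges F (hd ys) (last ys)"
  show "f \<in> (\<lambda>i. {ys ! i, ys ! Suc i}) ` {i. Suc i < length ys}"
  proof (rule ccontr)
    assume "f \<notin> (\<lambda>i. {ys ! i, ys ! Suc i}) ` {i. Suc i < length ys}"
    then have "walk (F - {f}) ys" using ys(1) unfolding walk_def by auto
    then show False using f unfolding separating_edges_def reach_def by blast
  qed
next
  fix f assume "f \<in> (\<lambda>i. {ys ! i, ys ! Suc i}) ` {i. Suc i < length ys}"
  then obtain i where i: "Suc i < length ys" and f: "f = {ys ! i, ys ! Suc i}" by blast
  have "f \<in> F" using ys(1) i f by (simp add: walk_def)
  have avoid: "{ys ! l, ys ! Suc l} \<noteq> f" if "Suc l < length ys" "l \<noteq> i" for l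
    using distinct_walk_edge_eq[OF ys(2) i that(1)] that f by auto
  have "walk (F - {f}) (take (Suc i) ys)"
    using ys(1) avoid unfolding walk_def by auto
  moreover have "last (take (Suc i) ys) = ys ! i" using i by (simp add: take_Suc_conv_app_nth)
  ultimately have "reach (F - {f}) (hd ys) (ys ! i)"
    unfolding reach_def by (metis hd_take zero_less_Suc)
  moreover have "walk (F - {f}) (drop (Suc i) ys)"
    using ys(1) avoid i unfolding walk_def by auto
  then have "reach (F - {f}) (ys ! Suc i) (last ys)"
    unfolding reach_def using i by (intro exI[of _ "drop (Suc i) ys"]) (auto simp: hd_drop_conv_nth)
  moreover have "ys ! i \<noteq> ys ! Suc i" using ys(2) i by (simp add: nth_eq_iff_index_eq)
  ultimately have "\<not> reach (F - {f}) (hd ys) (last ys)"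
    using acyclic_graph_bridge[OF acyclic \<open>f \<in> F\<close>[unfolded f]] unfolding f
    by (meson reach_sym reach_trans)
  then show "f \<in> separating_edges F (hd ys) (last ys)"
    using \<open>f \<in> F\<close> by (simp add: separating_edges_def)
qed

lemma gdist_shortest_walk:
  assumes "reach F a b"
  obtains ys where "walk F ys" "distinct ys" "hd ys = a" "last ys = b"
    and "length ys = Suc (gdist F a b)"
proof -
  let ?len = "\<lambda>n. \<exists>xs. walk F xs \<and> hd xs = a \<and> last xs = b \<and> length xs = Suc n"
  obtain xs where "walk F xs" "hd xs = a" "last xs = b"
    using assms unfolding reach_def by blast
  then have "?len (length xs - 1)" by (intro exI[of _ xs]) (auto simp: walk_def)
  then have "?len (gdist F a b)" unfolding gdist_def by (rule LeastI)
  then obtain zs where zs: "walk F zs" "hd zs = a" "last zs = b" "length zs = Suc (gdist F a b)"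
    by blast
  then obtain ys where ys: "walk F ys" "distinct ys" "hd ys = a" "last ys = b"
      "length ys \<le> Suc (gdist F a b)"
    using walk_shortcut[OF zs(1)] zs(2-4) by auto
  then have "?len (length ys - 1)" by (intro exI[of _ ys]) (auto simp: walk_def)
  then have "gdist F a b \<le> length ys - 1" unfolding gdist_def by (rule Least_le)
  with ys have "length ys = Suc (gdist F a b)" by (cases ys) (auto simp: walk_def)
  with ys that show ?thesis by blast
qed

lemma gdist_eq_card_separating_edges:
  assumes "acyclic_graph F" and "reach F a b"
  shows "gdist F a b = card (separating_edges F a b)"
proof -
  obtain ys where ys: "walk F ys" "distinct ys" "hd ys = a" "last ys = b"
      "length ys = Suc (gdist F a b)"
    using gdist_shortest_walk[OF assms(2)] by blast
  have "inj_on (\<lambda>i. {ys ! i, ys ! Suc i}) {i. Suc i < length ys}"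
    using distinct_walk_edge_eq[OF ys(2)] by (intro inj_onI) blast
  then have "card (separating_edges F a b) = card {i. Suc i < length ys}"
    using separating_edges_distinct_walk[OF assms(1) ys(1,2)] ys(3,4) by (simp add: card_image)
  also have "{i. Suc i < length ys} = {..<gdist F a b}" using ys(5) by auto
  finally show ?thesis by simp
qed

lemma is_tree_edge:
  "is_tree V T \<Longrightarrow> e \<in> T \<Longrightarrow> \<exists>x y. x \<in> V \<and> y \<in> V \<and> x \<noteq> y \<and> e = {x, y}"
  unfolding is_tree_def graph_def by blast

lemma is_tree_reach: "is_tree V T \<Longrightarrow> x \<in> V \<Longrightarrow> y \<in> V \<Longrightarrow> reach T x y"
  unfolding is_tree_def connected_graph_def by blast

lemma two_forest_missing_edge_joins:
  assumes T: "is_tree V T" and F: "F \<in> two_forests V T a b"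
    and xy: "{x, y} \<in> T - F" and FH: "F \<subseteq> H"
  shows "reach H x y \<longleftrightarrow> reach H a b"
proof (rule reach_across)
  have FT: "F \<subseteq> T" and cover: "\<And>x. x \<in> V \<Longrightarrow> reach F a x \<or> reach F b x"
    using F unfolding two_forests_def by blast+
  obtain x' y' where "x' \<in> V" "y' \<in> V" "x' \<noteq> y'" "{x, y} = {x', y'}"
    using is_tree_edge[OF T] xy by blast
  then have "x \<in> V" "y \<in> V" "x \<noteq> y" by (auto simp: doubleton_eq_iff)
  moreover have "acyclic_graph T" using T by (simp add: is_tree_def)
  then have "\<not> reach (T - {{x, y}}) x y" using xy \<open>x \<noteq> y\<close> by (simp add: acyclic_graph_bridge)
  then have "\<not> reach F x y" using FT xy reach_mono[of F x y "T - {{x, y}}"] by blast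
  ultimately have "(reach F a x \<and> reach F b y) \<or> (reach F b x \<and> reach F a y)"
    by (intro reach_split_two_classes cover)
  then show "(reach H a x \<and> reach H b y) \<or> (reach H b x \<and> reach H a y)"
    using reach_mono[OF _ FH] by blast
qed

lemma two_forest_of_tree:
  assumes T: "is_tree V T" and a: "a \<in> V" and b: "b \<in> V" and F: "F \<in> two_forests V T a b"
  obtains f where "f \<in> separating_edges T a b" "F = T - {f}"
proof -
  have FT: "F \<subseteq> T" and not_ab: "\<not> reach F a b" using F by (auto simp: two_forests_def)
  have "T - F \<noteq> {}"
  proof
    assume "T - F = {}"
    then have "T \<subseteq> F" by blast
    then have "reach F a b" by (rule reach_mono[OF is_tree_reach[OF T a b]])
    with not_ab show False ..
  qed
  then obtain f where f: "f \<in> T" "f \<notin> F" by blast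
  have "g = f" if g: "g \<in> T" "g \<notin> F" for g
  proof (rule ccontr)
    assume "g \<noteq> f"
    obtain x y where xy: "f = {x, y}" using is_tree_edge[OF T f(1)] by blast
    obtain x' y' where x'y': "g = {x', y'}" "x' \<noteq> y'" using is_tree_edge[OF T g(1)] by blast
    have sub: "F \<subseteq> T - {g}" using FT g by blast
    have "reach (T - {g}) x y" using xy f \<open>g \<noteq> f\<close> by (simp add: reach_edge)
    then have "reach (T - {g}) a b"
      using two_forest_missing_edge_joins[OF T F _ sub] f xy by blast
    then have "reach (T - {g}) x' y'"
      using two_forest_missing_edge_joins[OF T F _ sub] g x'y' by blast
    moreover have "acyclic_graph T" using T by (simp add: is_tree_def)
    ultimately show False using acyclic_graph_bridge[of T x' y'] x'y' g by blast
  qed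
  then have "F = T - {f}" using FT f by blast
  moreover have "f \<in> separating_edges T a b"
    using f(1) not_ab calculation unfolding separating_edges_def by blast
  ultimately show ?thesis using that by blast
qed

lemma tree_minus_separating_edge:
  assumes T: "is_tree V T" and a: "a \<in> V" and b: "b \<in> V" and f: "f \<in> separating_edges T a b"
  shows "T - {f} \<in> two_forests V T a b"
proof -
  have fT: "f \<in> T" and not_ab: "\<not> reach (T - {f}) a b"
    using f by (auto simp: separating_edges_def)
  obtain u v where uv: "f = {u, v}" "u \<in> V" using is_tree_edge[OF T fT] by blast
  have to_ends: "reach (T - {f}) x u \<or> reach (T - {f}) x v" if "x \<in> V" for x
  proof -
    have "reach (insert {u, v} (T - {f})) x u"
      using is_tree_reach[OF T that uv(2)] uv(1) by (rule_tac reach_mono) auto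
    then show ?thesis using reach_insert_edge[of u v "T - {f}" x u] by blast
  qed
  have "reach (T - {f}) a x \<or> reach (T - {f}) b x" if "x \<in> V" for x
    using to_ends[OF that] to_ends[OF a] to_ends[OF b] not_ab by (meson reach_sym reach_trans)
  moreover have "acyclic_graph (T - {f})"
    using T by (auto simp: is_tree_def intro: acyclic_graph_subset)
  ultimately show ?thesis
    unfolding two_forests_def using not_ab by blast
qed

lemma two_forests_mono: "H \<subseteq> G \<Longrightarrow> two_forests V H a b \<subseteq> two_forests V G a b"
  unfolding two_forests_def by blast

lemma card_separating_path_cuts:
  assumes "j < n" "k < n"
  shows "card {l. Suc l < n \<and> (j \<le> l) \<noteq> (k \<le> l)} = max j k - min j k"
proof -
  have "{l. Suc l < n \<and> (j \<le> l) \<noteq> (k \<le> l)} = {min j k..<max j k}"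
    using assms by auto
  then show ?thesis by simp
qed

lemma card_separating_cycle_cuts:
  assumes "j < n" "k < n"
  shows "card {(i, l). i < l \<and> l < n \<and> (i < j \<and> j \<le> l) \<noteq> (i < k \<and> k \<le> l)}
    = (max j k - min j k) * (n - (max j k - min j k))"
proof -
  let ?lo = "min j k" and ?hi = "max j k"
  have "{(i, l). i < l \<and> l < n \<and> (i < j \<and> j \<le> l) \<noteq> (i < k \<and> k \<le> l)}
      = {..<?lo} \<times> {?lo..<?hi} \<union> {?lo..<?hi} \<times> {?hi..<n}"
    using assms by auto
  moreover have "card ({..<?lo} \<times> {?lo..<?hi} \<union> {?lo..<?hi} \<times> {?hi..<n})
      = ?lo * (?hi - ?lo) + (?hi - ?lo) * (n - ?hi)"
    by (subst card_Un_disjoint) (auto simp: card_cartesian_product)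
  moreover have "?lo * (?hi - ?lo) + (?hi - ?lo) * (n - ?hi) = (?hi - ?lo) * (n - (?hi - ?lo))"
  proof -
    have "n - (?hi - ?lo) = ?lo + (n - ?hi)" using assms by auto
    then show ?thesis by (simp add: algebra_simps)
  qed
  ultimately show ?thesis by simp
qed

lemma graph_subset: "graph V H \<Longrightarrow> F \<subseteq> H \<Longrightarrow> graph V F"
  unfolding graph_def by blast

locale tree_path =
  fixes V :: "'a set" and E :: "'a set set" and vs :: "'a list"
  assumes tree: "is_tree V E"
    and path: "walk E vs" and distinct: "distinct vs"
    and hd_in_V: "hd vs \<in> V" and last_in_V: "last vs \<in> V" and hd_neq_last: "hd vs \<noteq> last vs"
    and closing_edge_new: "{hd vs, last vs} \<notin> E"
begin

abbreviation c :: nat where "c \<equiv> length vs"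

definition G :: "'a set set" where "G = insert {hd vs, last vs} E"

text \<open>
  Indices are 0-based: \<open>vs ! m\<close> is the paper's \<open>v\<^sub>m\<^sub>+\<^sub>1\<close>, and \<open>cycle_edge (c - 1)\<close>
  is the added edge \<open>v\<^sub>cv\<^sub>1\<close>.
\<close>

definition cycle_edge :: "nat \<Rightarrow> 'a set" where "cycle_edge m = {vs ! m, vs ! (Suc m mod c)}"

definition cycle :: "'a set set" where "cycle = cycle_edge ` {..<c}"

definition subtree_edges :: "'a set set" where "subtree_edges = E - cycle"

lemma vs_nonempty [simp]: "vs \<noteq> []"
  using path by (simp add: walk_def)

lemma hd_eq_nth: "hd vs = vs ! 0" and last_eq_nth: "last vs = vs ! (c - 1)"
  using path by (simp_all add: walk_def hd_conv_nth last_conv_nth)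

lemma length_ge_3: "c \<ge> 3"
proof -
  have "c \<noteq> 0" "c \<noteq> 1" using path hd_neq_last by (auto simp: walk_def hd_eq_nth last_eq_nth)
  moreover have "c \<noteq> 2"
    using path closing_edge_new by (auto simp: walk_def hd_eq_nth last_eq_nth)
  ultimately show ?thesis by linarith
qed

lemma nth_eq_iff: "p < c \<Longrightarrow> q < c \<Longrightarrow> vs ! p = vs ! q \<longleftrightarrow> p = q"
  using distinct by (simp add: nth_eq_iff_index_eq)

lemma path_edge: "Suc m < c \<Longrightarrow> cycle_edge m = {vs ! m, vs ! Suc m}"
  by (simp add: cycle_edge_def)

lemma path_edge_in_E: "Suc m < c \<Longrightarrow> cycle_edge m \<in> E"
  using path by (simp add: path_edge walk_def)

lemma closing_edge: "cycle_edge (c - 1) = {hd vs, last vs}"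
proof -
  have "Suc (c - 1) = c" using length_ge_3 by simp
  then show ?thesis by (simp add: cycle_edge_def hd_eq_nth last_eq_nth insert_commute)
qed

lemma edge_subset_V:
  assumes "e \<in> E" shows "e \<subseteq> V"
proof -
  obtain x y where "x \<in> V" "y \<in> V" "e = {x, y}"
    using tree assms unfolding is_tree_def graph_def by blast
  then show ?thesis by simp
qed

lemma nth_in_V:
  assumes "p < c" shows "vs ! p \<in> V"
proof (cases "Suc p < c")
  case True
  then show ?thesis using edge_subset_V[OF path_edge_in_E[OF True]] by (simp add: path_edge)
next
  case False
  then have "p = c - 1" using assms by simp
  then show ?thesis using last_in_V by (simp add: last_eq_nth)
qed

lemma Suc_mod_length: "m < c \<Longrightarrow> Suc m mod c = (if Suc m < c then Suc m else 0)"
  by (simp add: mod_Suc)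

lemma cycle_edge_inj: "inj_on cycle_edge {..<c}"
proof (rule inj_onI)
  fix m m' assume m: "m \<in> {..<c}" and m': "m' \<in> {..<c}" and eq: "cycle_edge m = cycle_edge m'"
  have "Suc m mod c < c" "Suc m' mod c < c" by simp_all
  then have "m = m' \<or> (m = Suc m' mod c \<and> Suc m mod c = m')"
    using eq m m' unfolding cycle_edge_def by (auto simp: doubleton_eq_iff nth_eq_iff)
  then show "m = m'"
    using m m' length_ge_3 by (auto simp: Suc_mod_length split: if_splits)
qed

lemma cycle_edge_in_E_iff:
  assumes "m < c" shows "cycle_edge m \<in> E \<longleftrightarrow> Suc m < c"
proof (cases "Suc m < c")
  case False
  then have "m = c - 1" using assms by simp
  then show ?thesis using closing_edge closing_edge_new by simp
qed (simp add: path_edge_in_E)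

lemma cycle_edge_in_cycle: "m < c \<Longrightarrow> cycle_edge m \<in> cycle"
  by (simp add: cycle_def)

lemma E_inter_cycle: "E \<inter> cycle = cycle_edge ` {m. Suc m < c}"
  using cycle_edge_in_E_iff path_edge_in_E cycle_edge_in_cycle by (auto simp: cycle_def)

lemma G_eq: "G = subtree_edges \<union> cycle"
proof -
  have "cycle_edge (c - 1) \<in> cycle" using length_ge_3 by (simp add: cycle_edge_in_cycle)
  moreover have "cycle_edge m \<in> insert (cycle_edge (c - 1)) E" if "m < c" for m
  proof (cases "Suc m < c")
    case False
    then have "m = c - 1" using that by simp
    then show ?thesis by simp
  qed (simp add: path_edge_in_E)
  then have "cycle \<subseteq> insert (cycle_edge (c - 1)) E" by (auto simp: cycle_def)
  ultimately show ?thesis unfolding G_def subtree_edges_def closing_edge[symmetric] by blast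
qed

lemma subtree_edges_disjoint_cycle: "subtree_edges \<inter> cycle = {}"
  by (auto simp: subtree_edges_def)

lemma cycle_edge_eq_iff: "k < c \<Longrightarrow> i < c \<Longrightarrow> cycle_edge k = cycle_edge i \<longleftrightarrow> k = i"
  using inj_onD[OF cycle_edge_inj] by auto

lemma closing_edge_nth: "cycle_edge (c - 1) = {vs ! (c - 1), vs ! 0}"
  using closing_edge by (simp add: hd_eq_nth last_eq_nth insert_commute)

lemma graph_G: "graph V G"
  using tree hd_in_V last_in_V hd_neq_last by (auto simp: is_tree_def graph_def G_def)

lemma G_edge_subset_V: "e \<in> G \<Longrightarrow> e \<subseteq> V"
  using graph_G by (auto simp: graph_def)

lemma acyclic_E: "acyclic_graph E"
  using tree by (simp add: is_tree_def)

lemma E_eq_G_minus_closing_edge: "E = G - {cycle_edge (c - 1)}"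
  using closing_edge closing_edge_new by (auto simp: G_def)

lemma reach_path_segment:
  assumes "p \<le> q" "q < c" "\<And>m. p \<le> m \<Longrightarrow> m < q \<Longrightarrow> cycle_edge m \<in> S"
  shows "reach S (vs ! p) (vs ! q)"
  using assms
proof (induction q)
  case (Suc q)
  show ?case
  proof (cases "p = Suc q")
    case False
    then have "reach S (vs ! p) (vs ! q)" using Suc by simp
    moreover have "cycle_edge q \<in> S" using Suc.prems False by simp
    then have "reach S (vs ! q) (vs ! Suc q)" using Suc.prems(2) by (simp add: path_edge reach_edge)
    ultimately show ?thesis by (rule reach_trans)
  qed simp
qed simp

lemma reach_minus_path_edge_nth:
  assumes m: "Suc m < c" and p: "p < c" and q: "q < c"
  shows "reach (E - {cycle_edge m}) (vs ! p) (vs ! q) \<longleftrightarrow> (p \<le> m \<longleftrightarrow> q \<le> m)"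
proof -
  let ?H = "E - {cycle_edge m}"
  define side where "side r = (if r \<le> m then m else Suc m)" for r
  have in_H: "cycle_edge k \<in> ?H" if "Suc k < c" "k \<noteq> m" for k
    using that m path_edge_in_E[OF that(1)] inj_onD[OF cycle_edge_inj, of k m] by auto
  have to_side: "reach ?H (vs ! r) (vs ! side r)" if "r < c" for r
  proof (cases "r \<le> m")
    case True
    have "reach ?H (vs ! r) (vs ! m)" using True m by (intro reach_path_segment in_H) auto
    with True show ?thesis unfolding side_def by simp
  next
    case False
    have "reach ?H (vs ! Suc m) (vs ! r)" using False that by (intro reach_path_segment in_H) auto
    with False show ?thesis unfolding side_def by (simp add: reach_sym)
  qed
  have "\<not> reach ?H (vs ! m) (vs ! Suc m)"
    using acyclic_graph_bridge[OF acyclic_E path_edge_in_E[OF m, unfolded path_edge[OF m]]]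
      nth_eq_iff[of m "Suc m"] m
    by (simp add: path_edge)
  then have "reach ?H (vs ! side p) (vs ! side q) \<longleftrightarrow> side p = side q"
    using reach_sym[of ?H "vs ! Suc m" "vs ! m"] unfolding side_def by auto
  moreover have "reach ?H (vs ! p) (vs ! q) \<longleftrightarrow> reach ?H (vs ! side p) (vs ! side q)"
    using to_side[OF p] to_side[OF q] by (meson reach_sym reach_trans)
  ultimately show ?thesis unfolding side_def by auto
qed

lemma nth_eq_of_reach_subtree_edges:
  assumes p: "p < c" and q: "q < c" and r: "reach subtree_edges (vs ! p) (vs ! q)"
  shows "p = q"
proof (rule ccontr)
  assume "p \<noteq> q"
  define m where "m = min p q"
  have m: "Suc m < c" using p q \<open>p \<noteq> q\<close> by (auto simp: m_def)
  have "subtree_edges \<subseteq> E - {cycle_edge m}"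
    using cycle_edge_in_cycle[of m] m by (auto simp: subtree_edges_def)
  then have "reach (E - {cycle_edge m}) (vs ! p) (vs ! q)" by (rule reach_mono[OF r])
  then have "p \<le> m \<longleftrightarrow> q \<le> m" using reach_minus_path_edge_nth[OF m p q] by blast
  then show False using \<open>p \<noteq> q\<close> by (auto simp: m_def)
qed

lemma ex_reach_subtree_edges:
  assumes "x \<in> V" shows "\<exists>j<c. reach subtree_edges x (vs ! j)"
proof -
  have "reach E x (vs ! 0)"
    using tree assms nth_in_V[of 0] by (simp add: is_tree_def connected_graph_def)
  moreover have "\<exists>u\<in>set vs. \<exists>v\<in>set vs. e = {u, v}" if e: "e \<in> cycle" for e
  proof -
    obtain m where "m < c" "e = cycle_edge m" using e by (auto simp: cycle_def)
    then show ?thesis unfolding cycle_edge_def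
      by (intro bexI[of _ "vs ! m"] bexI[of _ "vs ! (Suc m mod c)"]) auto
  qed
  ultimately obtain w where "w \<in> set vs" "reach (E - cycle) x w"
    using reach_diff_edges_within[of cycle "set vs" E x "vs ! 0"] by (auto simp: cycle_def)
  then show ?thesis unfolding subtree_edges_def by (auto simp: in_set_conv_nth)
qed

definition subtree_index :: "'a \<Rightarrow> nat" where
  "subtree_index x = (THE j. j < c \<and> reach subtree_edges x (vs ! j))"

lemma subtree_index:
  assumes "x \<in> V"
  shows "subtree_index x < c" and "reach subtree_edges x (vs ! subtree_index x)"
proof -
  have "j = l"
    if "j < c" "reach subtree_edges x (vs ! j)" "l < c" "reach subtree_edges x (vs ! l)" for j l
    using that(1,3) reach_trans[OF reach_sym[OF that(2)] that(4)]
      by (rule nth_eq_of_reach_subtree_edges)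
  then have "\<exists>!j. j < c \<and> reach subtree_edges x (vs ! j)"
    using ex_reach_subtree_edges[OF assms] by blast
  then have "subtree_index x < c \<and> reach subtree_edges x (vs ! subtree_index x)"
    unfolding subtree_index_def by (rule theI')
  then show "subtree_index x < c" "reach subtree_edges x (vs ! subtree_index x)" by auto
qed

lemma subtree_index_eqI:
  assumes x: "x \<in> V" and j: "j < c" and r: "reach subtree_edges x (vs ! j)"
  shows "subtree_index x = j"
  using subtree_index(1)[OF x] j reach_trans[OF reach_sym[OF subtree_index(2)[OF x]] r]
  by (rule nth_eq_of_reach_subtree_edges)

lemma subtree_index_nth: "j < c \<Longrightarrow> subtree_index (vs ! j) = j"
  by (simp add: subtree_index_eqI nth_in_V)

lemma subtree_eq:
  assumes j: "j < c"
  shows "subtree V E vs j = {x \<in> V. subtree_index x = j}"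
proof -
  define R where "R = {{vs ! i, vs ! Suc i} | i. Suc i < c \<and> (i = j \<or> Suc i = j)}"
  have "R \<subseteq> cycle"
    unfolding R_def by (auto simp: path_edge[symmetric] cycle_edge_in_cycle)
  then have sub: "subtree_edges \<subseteq> E - R" by (auto simp: subtree_edges_def)
  have "subtree V E vs j = {x \<in> V. reach (E - R) (vs ! j) x}"
    unfolding subtree_def comp_def R_def ..
  also have "\<dots> = {x \<in> V. subtree_index x = j}"
  proof (intro Collect_cong conj_cong refl iffI)
    fix x assume x: "x \<in> V" and "reach (E - R) (vs ! j) x"
    moreover have "reach (E - R) x (vs ! subtree_index x)"
      using subtree_index(2)[OF x] sub by (rule reach_mono)
    ultimately have r: "reach (E - R) (vs ! j) (vs ! subtree_index x)" by (blast intro: reach_trans)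
    show "subtree_index x = j"
    proof (rule ccontr)
      let ?l = "subtree_index x"
      assume "?l \<noteq> j"
      define m where "m = (if j < ?l then j else j - 1)"
      have l: "?l < c" using subtree_index(1)[OF x] .
      have m: "Suc m < c" and side: "(j \<le> m) \<noteq> (?l \<le> m)"
        using j l \<open>?l \<noteq> j\<close> by (auto simp: m_def)
      have "cycle_edge m \<in> R"
        unfolding R_def path_edge[OF m] using m \<open>?l \<noteq> j\<close> by (auto simp: m_def)
      then have "reach (E - {cycle_edge m}) (vs ! j) (vs ! ?l)"
        by (intro reach_mono[OF r]) blast
      then show False using reach_minus_path_edge_nth[OF m j l] side by blast
    qed
  next
    fix x assume x: "x \<in> V" and "subtree_index x = j"
    then show "reach (E - R) (vs ! j) x"
      using reach_sym[OF reach_mono[OF subtree_index(2)[OF x] sub]] by simp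
  qed
  finally show ?thesis .
qed

lemma reach_cycle_minus_edge_nth:
  assumes i: "i < c" and p: "p < c" and q: "q < c"
  shows "reach (cycle - {cycle_edge i}) (vs ! p) (vs ! q)"
proof -
  let ?S = "cycle - {cycle_edge i}"
  have in_S: "cycle_edge k \<in> ?S" if "k < c" "k \<noteq> i" for k
    using that i by (simp add: cycle_edge_in_cycle cycle_edge_eq_iff)
  have to_0: "reach ?S (vs ! p) (vs ! 0)" if p: "p < c" for p
  proof (cases "p \<le> i")
    case True
    have "reach ?S (vs ! 0) (vs ! p)" using True p by (intro reach_path_segment in_S) auto
    then show ?thesis by (rule reach_sym)
  next
    case False
    have "reach ?S (vs ! p) (vs ! (c - 1))" using False p by (intro reach_path_segment in_S) auto
    moreover have "cycle_edge (c - 1) \<in> ?S" using in_S[of "c - 1"] False p by simp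
    then have "reach ?S (vs ! (c - 1)) (vs ! 0)" unfolding closing_edge_nth by (rule reach_edge)
    ultimately show ?thesis by (rule reach_trans)
  qed
  show ?thesis using to_0[OF p] reach_sym[OF to_0[OF q]] by (rule reach_trans)
qed

lemma reach_cycle_minus_two_edges_nth:
  assumes il: "i < l" "l < c" and p: "p < c" and q: "q < c"
    and same_arc: "(i < p \<and> p \<le> l) \<longleftrightarrow> (i < q \<and> q \<le> l)"
  shows "reach (cycle - {cycle_edge i, cycle_edge l}) (vs ! p) (vs ! q)"
proof -
  let ?S = "cycle - {cycle_edge i, cycle_edge l}"
  have in_S: "cycle_edge k \<in> ?S" if "k < c" "k \<noteq> i" "k \<noteq> l" for k
    using that il by (simp add: cycle_edge_in_cycle cycle_edge_eq_iff)
  define base where "base t = (if i < t \<and> t \<le> l then l else 0)" for t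
  have to_base: "reach ?S (vs ! t) (vs ! base t)" if t: "t < c" for t
  proof -
    consider "i < t \<and> t \<le> l" | "t \<le> i" | "l < t" by linarith
    then show ?thesis
    proof cases
      case 1
      then show ?thesis unfolding base_def using il by (simp, intro reach_path_segment in_S) auto
    next
      case 2
      then have "reach ?S (vs ! 0) (vs ! t)" using il by (intro reach_path_segment in_S) auto
      then have "reach ?S (vs ! t) (vs ! 0)" by (rule reach_sym)
      then show ?thesis unfolding base_def using 2 by simp
    next
      case 3
      have "reach ?S (vs ! t) (vs ! (c - 1))" using 3 t il by (intro reach_path_segment in_S) auto
      moreover have "cycle_edge (c - 1) \<in> ?S" using in_S[of "c - 1"] 3 t il by simp
      then have "reach ?S (vs ! (c - 1)) (vs ! 0)" unfolding closing_edge_nth by (rule reach_edge)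
      ultimately have "reach ?S (vs ! t) (vs ! 0)" by (rule reach_trans)
      then show ?thesis unfolding base_def using 3 by simp
    qed
  qed
  have "base q = base p" using same_arc by (simp add: base_def)
  then have "reach ?S (vs ! base p) (vs ! q)" using reach_sym[OF to_base[OF q]] by simp
  with to_base[OF p] show ?thesis by (rule reach_trans)
qed

lemma subtree_index_edge:
  assumes "{y, z} \<in> subtree_edges" "y \<in> V" "z \<in> V"
  shows "subtree_index z = subtree_index y"
proof (rule subtree_index_eqI)
  have "reach subtree_edges z y" using assms(1) by (simp add: reach_edge insert_commute)
  then show "reach subtree_edges z (vs ! subtree_index y)"
    using subtree_index(2)[OF assms(2)] by (rule reach_trans)
qed (use assms subtree_index in auto)

lemma in_arc_subtree_index_edge:
  assumes il: "i < l" "l < c" and yz: "{y, z} \<in> G - {cycle_edge i, cycle_edge l}"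
    and y: "y \<in> V" and z: "z \<in> V"
  shows "(i < subtree_index y \<and> subtree_index y \<le> l) \<longleftrightarrow> (i < subtree_index z \<and> subtree_index z \<le> l)"
proof (cases "{y, z} \<in> subtree_edges")
  case True
  then show ?thesis using subtree_index_edge y z by simp
next
  case False
  then obtain m where m: "m < c" "m \<noteq> i" "m \<noteq> l" "{y, z} = cycle_edge m"
    using yz by (auto simp: G_eq cycle_def)
  then have "{y, z} = {vs ! m, vs ! (Suc m mod c)}" by (simp add: cycle_edge_def)
  moreover have "Suc m mod c < c" by simp
  moreover have "(i < m \<and> m \<le> l) \<longleftrightarrow> (i < Suc m mod c \<and> Suc m mod c \<le> l)"
    using m il by (auto simp: Suc_mod_length)
  ultimately show ?thesis
    using m(1) subtree_index_nth by (auto simp: doubleton_eq_iff)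
qed

text \<open>
  Deleting the cycle edges \<open>i < l\<close> leaves the arc \<open>vs ! (i + 1), \<dots>, vs ! l\<close> and its complement.
\<close>

lemma reach_G_minus_two_cycle_edges:
  assumes il: "i < l" "l < c" and a: "a \<in> V" and b: "b \<in> V"
  shows "reach (G - {cycle_edge i, cycle_edge l}) a b \<longleftrightarrow>
    ((i < subtree_index a \<and> subtree_index a \<le> l) \<longleftrightarrow> (i < subtree_index b \<and> subtree_index b \<le> l))"
    (is "?reach \<longleftrightarrow> (?arc a \<longleftrightarrow> ?arc b)")
proof
  let ?H = "G - {cycle_edge i, cycle_edge l}"
  assume ?reach
  then have "b \<in> V \<and> (?arc b \<longleftrightarrow> ?arc a)"
    unfolding reach_iff_rtranclp
  proof (induction rule: rtranclp_induct)
    case (step y z)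
    then have yz: "{y, z} \<in> ?H" and y: "y \<in> V" by auto
    then have z: "z \<in> V" using G_edge_subset_V by auto
    with step.IH show ?case using in_arc_subtree_index_edge[OF il yz y z] by simp
  qed (use a in simp)
  then show "?arc a \<longleftrightarrow> ?arc b" by simp
next
  let ?H = "G - {cycle_edge i, cycle_edge l}"
  assume same_arc: "?arc a \<longleftrightarrow> ?arc b"
  have sub1: "subtree_edges \<subseteq> ?H" and sub2: "cycle - {cycle_edge i, cycle_edge l} \<subseteq> ?H"
    using subtree_edges_disjoint_cycle il cycle_edge_in_cycle by (auto simp: G_eq)
  have "reach ?H a (vs ! subtree_index a)" "reach ?H b (vs ! subtree_index b)"
    using reach_mono[OF subtree_index(2) sub1] a b by auto
  moreover have "reach ?H (vs ! subtree_index a) (vs ! subtree_index b)"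
    using reach_cycle_minus_two_edges_nth[OF il subtree_index(1)[OF a] subtree_index(1)[OF b]
        same_arc]
    by (rule reach_mono[OF _ sub2])
  ultimately show ?reach by (blast intro: reach_trans reach_sym)
qed

lemma reach_E_minus_path_edge:
  assumes l: "Suc l < c" and a: "a \<in> V" and b: "b \<in> V"
  shows "reach (E - {cycle_edge l}) a b \<longleftrightarrow> (subtree_index a \<le> l \<longleftrightarrow> subtree_index b \<le> l)"
proof -
  have "E - {cycle_edge l} = G - {cycle_edge l, cycle_edge (c - 1)}"
    using closing_edge closing_edge_new by (auto simp: G_def)
  moreover have "(l < t \<and> t \<le> c - 1) \<longleftrightarrow> \<not> t \<le> l" if "t < c" for t
    using that by auto
  ultimately show ?thesis
    using reach_G_minus_two_cycle_edges[of l "c - 1", OF _ _ a b] l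
      subtree_index(1)[OF a] subtree_index(1)[OF b]
    by simp
qed

lemma acyclic_G_minus_cycle_edge:
  assumes i: "i < c" shows "acyclic_graph (G - {cycle_edge i})"
proof (cases "Suc i < c")
  case True
  have "\<not> reach (E - {cycle_edge i}) (hd vs) (last vs)"
    using reach_minus_path_edge_nth[OF True, of 0 "c - 1"] True by (simp add: hd_eq_nth last_eq_nth)
  moreover have "acyclic_graph (E - {cycle_edge i})"
    using acyclic_E by (rule acyclic_graph_subset) blast
  ultimately have "acyclic_graph (insert {hd vs, last vs} (E - {cycle_edge i}))"
    by (intro acyclic_graph_insert hd_neq_last)
  moreover have "G - {cycle_edge i} = insert {hd vs, last vs} (E - {cycle_edge i})"
    using path_edge_in_E[OF True] closing_edge_new by (auto simp: G_def)
  ultimately show ?thesis by simp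
next
  case False
  then have "i = c - 1" using i by simp
  then have "G - {cycle_edge i} = E" using E_eq_G_minus_closing_edge by simp
  then show ?thesis using acyclic_E by simp
qed

lemma is_tree_G_minus_cycle_edge:
  assumes i: "i < c" shows "is_tree V (G - {cycle_edge i})"
  unfolding is_tree_def
proof (intro conjI)
  show "graph V (G - {cycle_edge i})" using graph_G Diff_subset by (rule graph_subset)
  show "V \<noteq> {}" using hd_in_V by blast
  have to_0: "reach (G - {cycle_edge i}) x (vs ! 0)" if x: "x \<in> V" for x
  proof -
    have sub1: "subtree_edges \<subseteq> G - {cycle_edge i}"
      and sub2: "cycle - {cycle_edge i} \<subseteq> G - {cycle_edge i}"
      using subtree_edges_disjoint_cycle i cycle_edge_in_cycle by (auto simp: G_eq)
    have "0 < c" using length_ge_3 by simp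
    have "reach (G - {cycle_edge i}) x (vs ! subtree_index x)"
      using subtree_index(2)[OF x] sub1 by (rule reach_mono)
    moreover have "reach (G - {cycle_edge i}) (vs ! subtree_index x) (vs ! 0)"
      using reach_cycle_minus_edge_nth[OF i subtree_index(1)[OF x] \<open>0 < c\<close>] sub2
        by (rule reach_mono)
    ultimately show ?thesis by (rule reach_trans)
  qed
  show "connected_graph V (G - {cycle_edge i})"
    unfolding connected_graph_def using reach_trans[OF to_0 reach_sym[OF to_0]] by blast
  show "acyclic_graph (G - {cycle_edge i})" using i by (rule acyclic_G_minus_cycle_edge)
qed

lemma two_forests_G_in_spanning_tree:
  assumes F: "F \<in> two_forests V G a b"
  obtains i where "i < c" "F \<in> two_forests V (G - {cycle_edge i}) a b"
proof -
  have "\<exists>i<c. cycle_edge i \<notin> F"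
  proof (rule ccontr)
    assume "\<not> (\<exists>i<c. cycle_edge i \<notin> F)"
    then have all: "cycle_edge i \<in> F" if "i < c" for i using that by blast
    have "reach (F - {cycle_edge (c - 1)}) (vs ! 0) (vs ! (c - 1))"
      using all by (intro reach_path_segment) (auto simp: cycle_edge_eq_iff)
    then have "reach (F - {{vs ! (c - 1), vs ! 0}}) (vs ! (c - 1)) (vs ! 0)"
      unfolding closing_edge_nth by (rule reach_sym)
    moreover have "cycle_edge (c - 1) \<in> F" using all length_ge_3 by simp
    then have "{vs ! (c - 1), vs ! 0} \<in> F" unfolding closing_edge_nth .
    moreover have "acyclic_graph F" using F by (simp add: two_forests_def)
    moreover have "vs ! (c - 1) \<noteq> vs ! 0" using length_ge_3 by (simp add: nth_eq_iff)
    ultimately show False using acyclic_graph_bridge[of F "vs ! (c - 1)" "vs ! 0"] by blast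
  qed
  then obtain i where i: "i < c" "cycle_edge i \<notin> F" by blast
  have "F \<subseteq> G - {cycle_edge i}" using F i(2) by (auto simp: two_forests_def)
  then have "F \<in> two_forests V (G - {cycle_edge i}) a b" using F by (simp add: two_forests_def)
  with i(1) show ?thesis by (rule that)
qed

text \<open>Any \<open>c - 1\<close> cycle edges connect all cycle vertices.\<close>

lemma reach_swap_cycle_edge:
  assumes i: "i < c" and i': "i' < c" and f: "f \<notin> cycle"
    and r: "reach (G - {cycle_edge i, f}) x y"
  shows "reach (G - {cycle_edge i', f}) x y"
  using r
proof (rule reach_via_edges)
  fix u w assume uw: "{u, w} \<in> G - {cycle_edge i, f}"
  show "reach (G - {cycle_edge i', f}) u w"
  proof (cases "{u, w} \<in> cycle")
    case True
    then obtain m where m: "m < c" "{u, w} = {vs ! m, vs ! (Suc m mod c)}"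
      by (auto simp: cycle_def cycle_edge_def)
    have sub: "cycle - {cycle_edge i'} \<subseteq> G - {cycle_edge i', f}" using f by (auto simp: G_eq)
    have "reach (G - {cycle_edge i', f}) (vs ! p) (vs ! q)" if "p < c" "q < c" for p q
      using reach_cycle_minus_edge_nth[OF i' that] sub by (rule reach_mono)
    then show ?thesis using m by (auto simp: doubleton_eq_iff)
  next
    case False
    then have "{u, w} \<in> G - {cycle_edge i', f}" using uw i' cycle_edge_in_cycle by auto
    then show ?thesis by (rule reach_edge)
  qed
qed

lemma reach_G_minus_cycle_edge_subtree_edge:
  assumes i: "i < c" and f: "f \<in> subtree_edges"
  shows "reach (G - {cycle_edge i, f}) a b \<longleftrightarrow> reach (E - {f}) a b"
proof -
  have "f \<notin> cycle" using f subtree_edges_disjoint_cycle by blast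
  moreover have "E - {f} = G - {cycle_edge (c - 1), f}"
    using E_eq_G_minus_closing_edge by blast
  ultimately show ?thesis using i length_ge_3 reach_swap_cycle_edge[of i "c - 1" f a b]
      reach_swap_cycle_edge[of "c - 1" i f a b] by auto
qed

lemma separating_edges_G_minus_cycle_edge:
  assumes i: "i < c"
  shows "separating_edges (G - {cycle_edge i}) a b =
    (subtree_edges \<inter> separating_edges E a b) \<union>
    cycle_edge ` {l. l < c \<and> l \<noteq> i \<and> \<not> reach (G - {cycle_edge i, cycle_edge l}) a b}"
proof -
  note off_cycle = reach_G_minus_cycle_edge_subtree_edge[OF i]
  have minus_two: "G - {cycle_edge i} - {f} = G - {cycle_edge i, f}" for f by blast
  show ?thesis
  proof (intro equalityI subsetI)
    fix f assume "f \<in> separating_edges (G - {cycle_edge i}) a b"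
    then have f: "f \<in> G" "f \<noteq> cycle_edge i" and not_ab: "\<not> reach (G - {cycle_edge i, f}) a b"
      by (auto simp: separating_edges_def minus_two)
    show "f \<in> (subtree_edges \<inter> separating_edges E a b) \<union>
      cycle_edge ` {l. l < c \<and> l \<noteq> i \<and> \<not> reach (G - {cycle_edge i, cycle_edge l}) a b}"
    proof (cases "f \<in> subtree_edges")
      case True
      then show ?thesis
        using off_cycle not_ab by (auto simp: separating_edges_def subtree_edges_def)
    next
      case False
      then obtain l where "l < c" "f = cycle_edge l" using f(1) by (auto simp: G_eq cycle_def)
      then show ?thesis using f(2) not_ab by auto
    qed
  next
    fix f assume "f \<in> (subtree_edges \<inter> separating_edges E a b) \<union>
      cycle_edge ` {l. l < c \<and> l \<noteq> i \<and> \<not> reach (G - {cycle_edge i, cycle_edge l}) a b}"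
    then consider "f \<in> subtree_edges" "\<not> reach (E - {f}) a b"
      | l where "l < c" "l \<noteq> i" "f = cycle_edge l" "\<not> reach (G - {cycle_edge i, cycle_edge l}) a b"
      by (auto simp: separating_edges_def)
    then show "f \<in> separating_edges (G - {cycle_edge i}) a b"
    proof cases
      case 1
      then have "f \<in> G - {cycle_edge i}"
        using i subtree_edges_disjoint_cycle cycle_edge_in_cycle by (auto simp: G_eq)
      then show ?thesis using 1 off_cycle by (simp add: separating_edges_def minus_two)
    next
      case 2
      then have "f \<in> G - {cycle_edge i}"
        using i by (simp add: G_eq cycle_edge_in_cycle cycle_edge_eq_iff)
      then show ?thesis using 2 by (simp add: separating_edges_def minus_two)
    qed
  qed
qed

definition cycle_cut_pairs :: "'a \<Rightarrow> 'a \<Rightarrow> (nat \<times> nat) set" where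
  "cycle_cut_pairs a b = {(i, l). i < l \<and> l < c \<and> \<not> reach (G - {cycle_edge i, cycle_edge l}) a b}"

definition mixed_cuts :: "'a \<Rightarrow> 'a \<Rightarrow> 'a set set set" where
  "mixed_cuts a b =
    (\<lambda>(i, f). {cycle_edge i, f}) ` ({..<c} \<times> (subtree_edges \<inter> separating_edges E a b))"

definition cycle_cuts :: "'a \<Rightarrow> 'a \<Rightarrow> 'a set set set" where
  "cycle_cuts a b = (\<lambda>(i, l). {cycle_edge i, cycle_edge l}) ` cycle_cut_pairs a b"

lemma two_forests_G:
  assumes a: "a \<in> V" and b: "b \<in> V"
  shows "two_forests V G a b = (\<lambda>R. G - R) `
    {{cycle_edge i, f} | i f. i < c \<and> f \<in> separating_edges (G - {cycle_edge i}) a b}"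
proof (intro equalityI subsetI)
  fix F assume "F \<in> two_forests V G a b"
  then obtain i where i: "i < c" and F: "F \<in> two_forests V (G - {cycle_edge i}) a b"
    by (rule two_forests_G_in_spanning_tree)
  obtain f where "f \<in> separating_edges (G - {cycle_edge i}) a b" "F = G - {cycle_edge i} - {f}"
    using two_forest_of_tree[OF is_tree_G_minus_cycle_edge[OF i] a b F] by blast
  moreover have "G - {cycle_edge i} - {f} = G - {cycle_edge i, f}" by blast
  ultimately show "F \<in> (\<lambda>R. G - R) `
    {{cycle_edge i, f} | i f. i < c \<and> f \<in> separating_edges (G - {cycle_edge i}) a b}"
    using i by blast
next
  fix F assume "F \<in> (\<lambda>R. G - R) `
    {{cycle_edge i, f} | i f. i < c \<and> f \<in> separating_edges (G - {cycle_edge i}) a b}"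
  then obtain i f where i: "i < c" and f: "f \<in> separating_edges (G - {cycle_edge i}) a b"
    and "F = G - {cycle_edge i, f}" by blast
  moreover have "G - {cycle_edge i, f} = G - {cycle_edge i} - {f}" by blast
  ultimately have "F \<in> two_forests V (G - {cycle_edge i}) a b"
    using tree_minus_separating_edge[OF is_tree_G_minus_cycle_edge[OF i] a b f] by simp
  then show "F \<in> two_forests V G a b" using two_forests_mono[of "G - {cycle_edge i}" G] by blast
qed

lemma removed_pairs_eq_cuts:
  "{{cycle_edge i, f} | i f. i < c \<and> f \<in> separating_edges (G - {cycle_edge i}) a b}
    = mixed_cuts a b \<union> cycle_cuts a b"
proof (intro equalityI subsetI)
  fix R
  assume "R \<in> {{cycle_edge i, f} | i f. i < c \<and> f \<in> separating_edges (G - {cycle_edge i}) a b}"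
  then obtain i f where i: "i < c" and f: "f \<in> separating_edges (G - {cycle_edge i}) a b"
    and R: "R = {cycle_edge i, f}" by blast
  from f consider "f \<in> subtree_edges \<inter> separating_edges E a b"
    | l where "l < c" "l \<noteq> i" "f = cycle_edge l" "\<not> reach (G - {cycle_edge i, cycle_edge l}) a b"
    unfolding separating_edges_G_minus_cycle_edge[OF i] by blast
  then show "R \<in> mixed_cuts a b \<union> cycle_cuts a b"
  proof cases
    case 1
    then have "R \<in> mixed_cuts a b"
      unfolding mixed_cuts_def R using i by (intro image_eqI[where x = "(i, f)"]) auto
    then show ?thesis by blast
  next
    case (2 l)
    have eq: "{cycle_edge i, cycle_edge l} = {cycle_edge (min i l), cycle_edge (max i l)}"
      by (cases "i < l") (simp_all add: insert_commute min_def max_def)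
    have "min i l < max i l" "max i l < c" using 2 i by auto
    then have "(min i l, max i l) \<in> cycle_cut_pairs a b"
      using 2(4) unfolding cycle_cut_pairs_def eq by simp
    then have "R \<in> cycle_cuts a b"
      unfolding cycle_cuts_def R 2(3) eq by (rule rev_image_eqI) simp
    then show ?thesis by blast
  qed
next
  fix R assume R: "R \<in> mixed_cuts a b \<union> cycle_cuts a b"
  show "R \<in> {{cycle_edge i, f} | i f. i < c \<and> f \<in> separating_edges (G - {cycle_edge i}) a b}"
    using R
  proof
    assume "R \<in> mixed_cuts a b"
    then obtain i f where i: "i < c" and f: "f \<in> subtree_edges \<inter> separating_edges E a b"
        and "R = {cycle_edge i, f}"
      unfolding mixed_cuts_def by auto
    moreover have "f \<in> separating_edges (G - {cycle_edge i}) a b"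
      using f unfolding separating_edges_G_minus_cycle_edge[OF i] by blast
    ultimately show ?thesis by blast
  next
    assume "R \<in> cycle_cuts a b"
    then obtain i l where il: "i < l" "l < c"
        and not_ab: "\<not> reach (G - {cycle_edge i, cycle_edge l}) a b"
        and "R = {cycle_edge i, cycle_edge l}"
      unfolding cycle_cuts_def cycle_cut_pairs_def by auto
    moreover have "i < c" using il by simp
    moreover have "cycle_edge l \<in> separating_edges (G - {cycle_edge i}) a b"
      unfolding separating_edges_G_minus_cycle_edge[OF \<open>i < c\<close>] using il not_ab by blast
    ultimately show ?thesis by blast
  qed
qed

lemma card_mixed_cuts: "card (mixed_cuts a b) = c * card (subtree_edges \<inter> separating_edges E a b)"
proof -
  have "inj_on (\<lambda>(i, f). {cycle_edge i, f}) ({..<c} \<times> (subtree_edges \<inter> separating_edges E a b))"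
  proof (rule inj_onI)
    fix p p' assume p: "p \<in> {..<c} \<times> (subtree_edges \<inter> separating_edges E a b)"
      and p': "p' \<in> {..<c} \<times> (subtree_edges \<inter> separating_edges E a b)"
      and eq: "(\<lambda>(i, f). {cycle_edge i, f}) p = (\<lambda>(i, f). {cycle_edge i, f}) p'"
    obtain i f i' f' where p_def: "p = (i, f)" and p'_def: "p' = (i', f')" by fastforce
    have "i < c" "i' < c" "f \<notin> cycle" "f' \<notin> cycle"
      using p p' by (auto simp: p_def p'_def subtree_edges_def)
    moreover have "{cycle_edge i, f} = {cycle_edge i', f'}" using eq by (simp add: p_def p'_def)
    ultimately show "p = p'"
      unfolding p_def p'_def by (auto simp: doubleton_eq_iff cycle_edge_eq_iff cycle_edge_in_cycle)
  qed
  then show ?thesis by (simp add: mixed_cuts_def card_image card_cartesian_product)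
qed

lemma card_cycle_cuts: "card (cycle_cuts a b) = card (cycle_cut_pairs a b)"
proof -
  have "inj_on (\<lambda>(i, l). {cycle_edge i, cycle_edge l}) (cycle_cut_pairs a b)"
  proof (rule inj_onI)
    fix p p' assume p: "p \<in> cycle_cut_pairs a b" and p': "p' \<in> cycle_cut_pairs a b"
      and eq: "(\<lambda>(i, l). {cycle_edge i, cycle_edge l}) p =
        (\<lambda>(i, l). {cycle_edge i, cycle_edge l}) p'"
    obtain i l i' l' where p_def: "p = (i, l)" and p'_def: "p' = (i', l')" by fastforce
    have "i < l" "l < c" "i' < l'" "l' < c"
      using p p' by (auto simp: p_def p'_def cycle_cut_pairs_def)
    moreover have "{cycle_edge i, cycle_edge l} = {cycle_edge i', cycle_edge l'}"
      using eq by (simp add: p_def p'_def)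
    ultimately show "p = p'"
      unfolding p_def p'_def by (auto simp: doubleton_eq_iff cycle_edge_eq_iff)
  qed
  then show ?thesis by (simp add: cycle_cuts_def card_image)
qed

lemma finite_E: "finite E"
  using tree finite_subset[of E "Pow V"] edge_subset_V by (auto simp: is_tree_def graph_def)

lemma sigma_G_decomposition:
  assumes a: "a \<in> V" and b: "b \<in> V"
  shows "sigma V G a b =
    c * card (subtree_edges \<inter> separating_edges E a b) + card (cycle_cut_pairs a b)"
proof -
  have cycle_G: "cycle \<subseteq> G" by (simp add: G_eq)
  have mixed: "R \<subseteq> G \<and> R - cycle \<noteq> {}" if "R \<in> mixed_cuts a b" for R
    using that cycle_G cycle_edge_in_cycle by (auto simp: mixed_cuts_def subtree_edges_def G_def)
  have cuts: "R \<subseteq> cycle" if "R \<in> cycle_cuts a b" for R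
    using that cycle_edge_in_cycle by (auto simp: cycle_cuts_def cycle_cut_pairs_def)
  have "R \<subseteq> G" if "R \<in> mixed_cuts a b \<union> cycle_cuts a b" for R
    using that mixed cuts cycle_G by blast
  then have "inj_on (\<lambda>R. G - R) (mixed_cuts a b \<union> cycle_cuts a b)"
    by (intro inj_onI) (metis double_diff order_refl)
  moreover have "finite (mixed_cuts a b)"
    using finite_E by (simp add: mixed_cuts_def subtree_edges_def)
  moreover have "cycle_cut_pairs a b \<subseteq> {..<c} \<times> {..<c}" by (auto simp: cycle_cut_pairs_def)
  then have "finite (cycle_cuts a b)" by (simp add: cycle_cuts_def finite_subset)
  moreover have "mixed_cuts a b \<inter> cycle_cuts a b = {}" using mixed cuts by blast
  ultimately show ?thesis
    unfolding sigma_def two_forests_G[OF a b] removed_pairs_eq_cuts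
    by (simp add: card_image card_Un_disjoint card_mixed_cuts card_cycle_cuts)
qed

lemma gdist_E_decomposition:
  assumes a: "a \<in> V" and b: "b \<in> V"
  shows "gdist E a b = card (subtree_edges \<inter> separating_edges E a b)
    + card {l. Suc l < c \<and> (subtree_index a \<le> l) \<noteq> (subtree_index b \<le> l)}"
proof -
  let ?S = "subtree_edges \<inter> separating_edges E a b"
  let ?L = "{l. Suc l < c \<and> (subtree_index a \<le> l) \<noteq> (subtree_index b \<le> l)}"
  have "separating_edges E a b \<subseteq> subtree_edges \<union> (E \<inter> cycle)"
    by (auto simp: separating_edges_def subtree_edges_def)
  then have split: "separating_edges E a b = ?S \<union> cycle_edge ` ?L"
    using reach_E_minus_path_edge[OF _ a b] path_edge_in_E
    unfolding E_inter_cycle by (auto simp: separating_edges_def)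
  have "inj_on cycle_edge ?L" using cycle_edge_inj by (rule inj_on_subset) auto
  moreover have "?S \<inter> cycle_edge ` ?L = {}"
    using subtree_edges_disjoint_cycle cycle_edge_in_cycle by auto
  moreover have "finite ?S" using finite_E by (simp add: subtree_edges_def)
  moreover have "finite ?L" by (rule finite_subset[of _ "{..<c}"]) auto
  ultimately have "card (?S \<union> cycle_edge ` ?L) = card ?S + card ?L"
    by (simp add: card_Un_disjoint card_image)
  moreover have "gdist E a b = card (separating_edges E a b)"
    using acyclic_E is_tree_reach[OF tree a b] by (rule gdist_eq_card_separating_edges)
  moreover have "card (separating_edges E a b) = card (?S \<union> cycle_edge ` ?L)"
    using split by (rule arg_cong)
  ultimately show ?thesis by linarith
qed

lemma sigma_G_formula:
  assumes a: "a \<in> V" and b: "b \<in> V"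
  shows "int (sigma V G a b)
    = int c * int (gdist E a b) - (int (subtree_index a) - int (subtree_index b))^2"
proof -
  define j k where "j = subtree_index a" and "k = subtree_index b"
  have jk: "j < c" "k < c" using subtree_index(1) a b by (auto simp: j_def k_def)
  define d where "d = max j k - min j k"
  define X where "X = card (subtree_edges \<inter> separating_edges E a b)"
  have "cycle_cut_pairs a b = {(i, l). i < l \<and> l < c \<and> (i < j \<and> j \<le> l) \<noteq> (i < k \<and> k \<le> l)}"
    using reach_G_minus_two_cycle_edges[OF _ _ a b] by (auto simp: cycle_cut_pairs_def j_def k_def)
  then have "card (cycle_cut_pairs a b) = d * (c - d)"
    unfolding d_def by (simp only: card_separating_cycle_cuts[OF jk])
  then have sigma: "sigma V G a b = c * X + d * (c - d)"
    using sigma_G_decomposition[OF a b] by (simp add: X_def)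
  have "card {l. Suc l < c \<and> (j \<le> l) \<noteq> (k \<le> l)} = d"
    unfolding d_def by (rule card_separating_path_cuts[OF jk])
  then have gdist: "gdist E a b = X + d"
    using gdist_E_decomposition[OF a b] by (simp add: X_def j_def k_def)
  have "d \<le> c" using jk by (simp add: d_def)
  then have "int (sigma V G a b) = int c * int X + int d * (int c - int d)"
    by (simp add: sigma of_nat_diff)
  moreover have "(int j - int k)^2 = (int d)^2"
    by (simp add: d_def power2_commute max_def min_def of_nat_diff)
  ultimately show ?thesis
    unfolding gdist j_def[symmetric] k_def[symmetric] by (simp add: power2_eq_square algebra_simps)
qed

end

theorem lemma2p1:
  fixes V :: "'a set" and E :: "'a set set" and vs :: "'a list"
  assumes "is_tree V E"
    and "walk E vs" and "distinct vs"
    and "hd vs \<in> V" and "last vs \<in> V" and "hd vs \<noteq> last vs"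
    and "{hd vs, last vs} \<notin> E"
  shows "(\<forall>x\<in>V. \<exists>!j. j < length vs \<and> x \<in> subtree V E vs j) \<and>
         (\<forall>j < length vs. \<forall>k < length vs. \<forall>a \<in> subtree V E vs j. \<forall>b \<in> subtree V E vs k.
            int (sigma V (insert {hd vs, last vs} E) a b)
              = int (length vs) * int (gdist E a b) - (int j - int k)^2)"
proof -
  interpret tree_path V E vs using assms by unfold_locales
  have "\<exists>!j. j < length vs \<and> x \<in> subtree V E vs j" if "x \<in> V" for x
    using subtree_eq subtree_index(1)[OF that] that by auto
  moreover have "int (sigma V (insert {hd vs, last vs} E) a b)
      = int (length vs) * int (gdist E a b) - (int j - int k)^2"
    if "j < length vs" "k < length vs" "a \<in> subtree V E vs j" "b \<in> subtree V E vs k" for j k a b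
    using that sigma_G_formula subtree_eq unfolding G_def by auto
  ultimately show ?thesis by blast
qed

end
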